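(* Fix $k\ge1$. Let $\mathbf{P},\mathbf{Q}:(\mathbb{Z}/2\mathbb{Z})^k\to\mathbb{R}[x]$ be such that $P_{1\alpha}=Q_{1\alpha}$ for all $\alpha\in(\mathbb{Z}/2\mathbb{Z})^{k-1}$, and $P_{1\alpha}\not\equiv0$ for at least one $\alpha$. Define $\mathbf{S}:(\mathbb{Z}/2\mathbb{Z})^k\to\mathbb{R}[x]$ by $S_\alpha=P_\alpha+Q_\alpha$ if $\alpha_1=0$ and $S_\alpha=P_\alpha$ if $\alpha_1=1$. If $\mathbf{P}$ and $\mathbf{Q}$ are interpolatory $k$-cubes, then $\mathbf{S}$ is an interpolatory $k$-cube.
   Context: Elements of $(\mathbb{Z}/2\mathbb{Z})^k$ are strings $\alpha=\alpha_1\cdots\alpha_k$, and $\eta(i)$ has a single $1$ in coordinate $i$. Interpolation operators. For $\lambda,\rho\ge0$, ${}_1\mathrm{I}^\rho_\lambda$ maps $\mathbf{P}:(\mathbb{Z}/2\mathbb{Z})^k\to\mathbb{R}[x]$ to $\mathbf{Q}:(\mathbb{Z}/2\mathbb{Z})^{k-1}\to\mathbb{R}[x]$ with $Q_\alpha=\lambda P_{1\alpha}+\rho P_{0\alpha}$. For $k$-tuples $\lambda,\rho$ of nonnegative reals, $\mathbb{I}^\rho_\lambda={}_1\mathrm{I}^{\rho_k}_{\lambda_k}\cdots{}_1\mathrm{I}^{\rho_1}_{\lambda_1}$, which yields a single polynomial. Flip operators. $(\Phi_i\mathbf{P})_\alpha=xP_{\alpha+\eta(i)}$ if $\alpha_i=0$,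 and $=P_{\alpha+\eta(i)}$ if $\alpha_i=1$. $\Phi_S=\prod_{i\in S}\Phi_i$. Interpolatory $k$-cubes. $\mathbf{P}$ is an interpolatory $k$-cube if, for all $k$-tuples $\lambda,\rho$ of positive reals and all $S\subseteq\{1,\ldots,k\}$, $\mathbb{I}^\rho_\lambda\Phi_S\mathbf{P}$ is standard (i.e. $\equiv0$ or has positive leading coefficient) and has only nonpositive zeros (i.e. is $\equiv0$ or has all zeros real and $\le0$). *)

theory Defs
  imports "HOL-Computational_Algebra.Polynomial" "HOL-Library.Complex_Order" Complex_Main
begin

text \<open>Elements of (Z/2Z)^k are bool lists of length k (True = 1, False = 0);
  coordinate i (1-based in the paper) is list index i-1. A map
  (Z/2Z)^k -> R[x] is a function bool list => real poly, of which only the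
  values on lists of length k matter.\<close>

type_synonym cube = "bool list \<Rightarrow> real poly"

definition interp1 :: "real \<Rightarrow> real \<Rightarrow> cube \<Rightarrow> cube" where
  "interp1 l r P = (\<lambda>\<alpha>. smult l (P (True # \<alpha>)) + smult r (P (False # \<alpha>)))"

text \<open>Full interpolation I^rho_lambda = 1I^{rho_k}_{lambda_k} ... 1I^{rho_1}_{lambda_1};
  lambda_i, rho_i are given by l (i-1), r (i-1).\<close>
fun interp :: "nat \<Rightarrow> (nat \<Rightarrow> real) \<Rightarrow> (nat \<Rightarrow> real) \<Rightarrow> cube \<Rightarrow> real poly" where
  "interp 0 l r P = P []"
| "interp (Suc n) l r P =
     interp n (\<lambda>i. l (Suc i)) (\<lambda>i. r (Suc i)) (interp1 (l 0) (r 0) P)"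

definition flip :: "nat \<Rightarrow> cube \<Rightarrow> cube" where
  "flip i P = (\<lambda>\<alpha>. if \<alpha> ! i then P (\<alpha>[i := False])
                   else [:0, 1:] * P (\<alpha>[i := True]))"

text \<open>Phi_S = product of Phi_i over i in S (the Phi_i commute).\<close>
definition flipS :: "nat set \<Rightarrow> cube \<Rightarrow> cube" where
  "flipS S P = foldr flip (sorted_list_of_set S) P"

definition standard :: "real poly \<Rightarrow> bool" where
  "standard p \<longleftrightarrow> p = 0 \<or> lead_coeff p > 0"

definition nonpos_zeros :: "real poly \<Rightarrow> bool" where
  "nonpos_zeros p \<longleftrightarrow> p = 0 \<or>
     (\<forall>z::complex. poly (map_poly of_real p) z = 0 \<longrightarrow> Im z = 0 \<and> Re z \<le> 0)"

definition interpolatory_cube :: "nat \<Rightarrow> cube \<Rightarrow> bool" where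
  "interpolatory_cube k P \<longleftrightarrow>
     (\<forall>l r. (\<forall>i<k. l i > 0 \<and> r i > 0) \<longrightarrow>
        (\<forall>S. S \<subseteq> {..<k} \<longrightarrow>
           standard (interp k l r (flipS S P)) \<and> nonpos_zeros (interp k l r (flipS S P))))"

end

theory Submission
  imports Defs "HOL-Analysis.Complex_Transcendental"
    "HOL-Computational_Algebra.Fundamental_Theorem_Algebra"
begin

(*
  Splitting off the first coordinate writes every interpolation of a k-cube as s A + t B
  (first coordinate not flipped) or s B + t x A (flipped), where A and B interpolate the
  faces alpha_1 = 1 and alpha_1 = 0 along the remaining coordinates.  So a cube is
  interpolatory iff all these pairs (A, B) are interpolatory 1-cubes.  For P, Q and S the
  face A is the same nonzero polynomial a and the faces B add up, so it suffices to show: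
  if (a, b) and (a, c) are interpolatory and a <> 0, then so is (a, b + c).

  For a <> 0, (a, b) is interpolatory iff a and b have nonnegative coefficients and b(z)/a(z)
  lies in the closed sector 0 <= arg <= arg z for every z in the upper half-plane; sectors
  are convex cones, which makes the condition additive in b.  For the hard direction, write
  arg (b(z)/a(z)) as the sum of arg (z - s) over the zeros s of b minus the sum of
  arg (z - r) over the zeros r of a.  Real-rootedness of s a + t b and of s b + t x a keeps
  this continuous function away from pi and from arg z - pi on the connected upper
  half-plane, so it stays strictly between them.  Its boundary values on the negative axis,
  pi times the number of zeros of b minus the number of zeros of a to the right, then force
  the zeros of a and b to interlace, and since arg (z - rho) increases with rho, interlacing
  gives 0 <= arg (b(z)/a(z)) <= arg z.
*)

section \<open>Polynomials with nonnegative coefficients and nonpositive zeros\<close>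

abbreviation cpoly :: "real poly \<Rightarrow> complex poly" where
  "cpoly p \<equiv> map_poly complex_of_real p"

lemma cpoly_add [simp]: "cpoly (p + q) = cpoly p + cpoly q"
  by (rule poly_eqI) (simp add: coeff_map_poly)

lemma cpoly_smult [simp]: "cpoly (smult c p) = smult (of_real c) (cpoly p)"
  by (rule poly_eqI) (simp add: coeff_map_poly)

lemma cpoly_mult [simp]: "cpoly (p * q) = cpoly p * cpoly q"
  by (rule poly_eqI) (simp add: coeff_map_poly coeff_mult)

lemma cpoly_pCons [simp]: "cpoly (pCons a p) = pCons (of_real a) (cpoly p)"
  by (simp add: map_poly_pCons)

lemma cpoly_prod_list: "cpoly (\<Prod>x\<leftarrow>xs. f x) = (\<Prod>x\<leftarrow>xs. cpoly (f x))"
  by (induction xs) simp_all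

lemma cpoly_inject: "cpoly p = cpoly q \<Longrightarrow> p = q"
  by (metis coeff_map_poly of_real_0 of_real_eq_iff poly_eqI)

lemma poly_cpoly_of_real [simp]: "poly (cpoly p) (of_real x) = of_real (poly p x)"
  by (induction p) (auto simp: map_poly_pCons)

lemma poly_cpoly_cnj: "poly (cpoly p) (cnj z) = cnj (poly (cpoly p) z)"
  by (subst poly_cnj_real) (auto simp: coeff_map_poly)

lemma poly_cpoly_linear_prod:
  "poly (cpoly (\<Prod>\<rho>\<leftarrow>rs. [:-\<rho>, 1:])) z = (\<Prod>\<rho>\<leftarrow>rs. z - of_real \<rho>)"
  by (induction rs) (simp_all del: mult_pCons_left)

definition nonneg_coeffs :: "real poly \<Rightarrow> bool" where
  "nonneg_coeffs p \<longleftrightarrow> (\<forall>j. 0 \<le> coeff p j)"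

lemma nonneg_coeffs_add: "nonneg_coeffs p \<Longrightarrow> nonneg_coeffs q \<Longrightarrow> nonneg_coeffs (p + q)"
  unfolding nonneg_coeffs_def by simp

lemma nonneg_coeffs_smult: "0 \<le> c \<Longrightarrow> nonneg_coeffs p \<Longrightarrow> nonneg_coeffs (smult c p)"
  unfolding nonneg_coeffs_def by simp

lemma nonneg_coeffs_mult: "nonneg_coeffs p \<Longrightarrow> nonneg_coeffs q \<Longrightarrow> nonneg_coeffs (p * q)"
  unfolding nonneg_coeffs_def coeff_mult by (auto intro!: sum_nonneg)

lemma nonneg_coeffs_pCons: "0 \<le> a \<Longrightarrow> nonneg_coeffs p \<Longrightarrow> nonneg_coeffs (pCons a p)"
  unfolding nonneg_coeffs_def by (auto simp: coeff_pCons split: nat.split)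

lemma nonneg_coeffs_linear: "0 \<le> a \<Longrightarrow> 0 \<le> b \<Longrightarrow> nonneg_coeffs [:a, b:]"
  unfolding nonneg_coeffs_def by (auto simp: coeff_pCons split: nat.split)

lemma nonneg_coeffs_linear_prod:
  "\<forall>\<rho>\<in>set rs. \<rho> \<le> 0 \<Longrightarrow> nonneg_coeffs (\<Prod>\<rho>\<leftarrow>rs. [:-\<rho>, 1:])"
proof (induction rs)
  case (Cons \<rho> rs)
  then have "nonneg_coeffs ([:-\<rho>, 1:] * (\<Prod>\<rho>\<leftarrow>rs. [:-\<rho>, 1:]))"
    by (intro nonneg_coeffs_mult nonneg_coeffs_linear) auto
  then show ?case by (simp only: list.map prod_list.Cons)
qed (simp add: nonneg_coeffs_def coeff_1)

lemma nonneg_coeffs_lead_coeff_pos: "nonneg_coeffs p \<Longrightarrow> p \<noteq> 0 \<Longrightarrow> 0 < lead_coeff p"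
  unfolding nonneg_coeffs_def by (metis leading_coeff_0_iff order_le_less)

lemma nonneg_coeffs_poly_pos:
  assumes "nonneg_coeffs p" "p \<noteq> 0" "0 < x"
  shows "0 < poly p x"
proof -
  have "0 < lead_coeff p * x ^ degree p"
    using nonneg_coeffs_lead_coeff_pos[OF assms(1,2)] assms(3) by simp
  also have "\<dots> \<le> (\<Sum>i\<le>degree p. coeff p i * x ^ i)"
    by (rule member_le_sum) (use assms in \<open>auto simp: nonneg_coeffs_def\<close>)
  finally show ?thesis by (simp add: poly_altdef)
qed

lemma nonneg_coeffs_comb_nonzero:
  assumes "nonneg_coeffs p" "nonneg_coeffs q" "p \<noteq> 0" "0 < s" "0 \<le> t"
  shows "smult s p + smult t q \<noteq> 0"
proof
  assume sum0: "smult s p + smult t q = 0"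
  have "coeff p j = 0" for j
  proof -
    have "s * coeff p j + t * coeff q j = 0"
      using arg_cong[OF sum0, of "\<lambda>r. coeff r j"] by simp
    moreover have "0 \<le> coeff p j" "0 \<le> coeff q j"
      using assms(1,2) by (auto simp: nonneg_coeffs_def)
    ultimately show ?thesis
      using assms(4,5) by (smt (verit) mult_nonneg_nonneg mult_pos_pos)
  qed
  with assms(3) show False by (simp add: poly_eq_iff)
qed

lemma nonneg_of_two_weight:
  fixes x y :: real
  assumes "\<forall>t>0. 0 \<le> x + t * y"
  shows "0 \<le> x"
proof (rule tendsto_lowerbound)
  show "((\<lambda>t. x + t * y) \<longlongrightarrow> x) (at_right 0)"
    by (auto intro!: tendsto_eq_intros)
  show "\<forall>\<^sub>F t in at_right 0. 0 \<le> x + t * y"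
    using eventually_at_right_less[of 0] by eventually_elim (use assms in auto)
qed simp

lemma nonneg_coeffs_of_two_weight:
  assumes "\<And>s t. 0 < s \<Longrightarrow> 0 < t \<Longrightarrow> nonneg_coeffs (smult s p + smult t q)"
  shows "nonneg_coeffs p" "nonneg_coeffs q"
proof -
  have comb: "0 \<le> s * coeff p j + t * coeff q j" if "0 < s" "0 < t" for s t j
    using assms[OF that] by (simp add: nonneg_coeffs_def)
  have "0 \<le> coeff p j" for j
    by (rule nonneg_of_two_weight[of _ "coeff q j"]) (use comb[of 1] in auto)
  then show "nonneg_coeffs p" by (simp add: nonneg_coeffs_def)
  have "0 \<le> coeff q j" for j
    by (rule nonneg_of_two_weight[of _ "coeff p j"]) (use comb[of _ 1] in \<open>auto simp: add.commute\<close>)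
  then show "nonneg_coeffs q" by (simp add: nonneg_coeffs_def)
qed

definition nonpos_rooted :: "real poly \<Rightarrow> bool" where
  "nonpos_rooted p \<longleftrightarrow> standard p \<and> nonpos_zeros p"

lemma nonpos_rooted_0 [simp]: "nonpos_rooted 0"
  by (simp add: nonpos_rooted_def standard_def nonpos_zeros_def)

lemma nonpos_rooted_real_zero:
  "nonpos_rooted p \<Longrightarrow> p \<noteq> 0 \<Longrightarrow> poly (cpoly p) z = 0 \<Longrightarrow> Im z = 0"
  by (simp add: nonpos_rooted_def nonpos_zeros_def)

lemma nonpos_rooted_factor:
  assumes "nonpos_rooted p" "p \<noteq> 0"
  obtains c rs where "0 < c" "\<forall>\<rho>\<in>set rs. \<rho> \<le> 0" "p = smult c (\<Prod>\<rho>\<leftarrow>rs. [:-\<rho>, 1:])"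
proof -
  have cpoly_nz: "cpoly p \<noteq> 0"
    using assms(2) by (simp add: map_poly_eq_0_iff)
  obtain zs where zs: "mset zs = proots (cpoly p)"
    using ex_mset by blast
  have zs_real: "of_real (Re z) = z" "Re z \<le> 0" if "z \<in> set zs" for z
  proof -
    have "poly (cpoly p) z = 0"
      using that cpoly_nz set_count_proots[of "cpoly p"] by (simp flip: zs)
    then show "of_real (Re z) = z" "Re z \<le> 0"
      using assms unfolding nonpos_rooted_def nonpos_zeros_def by (auto simp: complex_eq_iff)
  qed
  have "cpoly (smult (lead_coeff p) (\<Prod>\<rho>\<leftarrow>map Re zs. [:-\<rho>, 1:]))
      = smult (lead_coeff (cpoly p)) (\<Prod>z\<leftarrow>zs. [:-z, 1:])"
    using assms(2) zs_real
    by (simp add: o_def cpoly_prod_list lead_coeff_map_poly_nz cong: map_cong)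
  also have "\<dots> = cpoly p"
    using complex_poly_decompose_multiset[of "cpoly p"] by (simp flip: zs mset_map add: prod_mset_prod_list)
  finally have "p = smult (lead_coeff p) (\<Prod>\<rho>\<leftarrow>map Re zs. [:-\<rho>, 1:])"
    by (rule cpoly_inject[symmetric])
  moreover have "0 < lead_coeff p"
    using assms by (simp add: nonpos_rooted_def standard_def)
  moreover have "\<forall>\<rho>\<in>set (map Re zs). \<rho> \<le> 0"
    using zs_real(2) by auto
  ultimately show thesis
    using that by blast
qed

lemma nonpos_rooted_nonneg_coeffs:
  assumes "nonpos_rooted p"
  shows "nonneg_coeffs p"
proof (cases "p = 0")
  case False
  with assms obtain c rs where "0 < c" "\<forall>\<rho>\<in>set rs. \<rho> \<le> 0" "p = smult c (\<Prod>\<rho>\<leftarrow>rs. [:-\<rho>, 1:])"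
    by (rule nonpos_rooted_factor)
  then show ?thesis
    by (simp only: nonneg_coeffs_smult nonneg_coeffs_linear_prod less_imp_le)
qed (simp add: nonneg_coeffs_def)

lemma nonpos_rootedI:
  assumes "nonneg_coeffs p" "p \<noteq> 0" "\<And>z. poly (cpoly p) z = 0 \<Longrightarrow> Im z = 0"
  shows "nonpos_rooted p"
  unfolding nonpos_rooted_def standard_def nonpos_zeros_def
proof (intro conjI disjI2 allI impI)
  show "0 < lead_coeff p"
    using assms(1,2) by (rule nonneg_coeffs_lead_coeff_pos)
  fix z assume root: "poly (cpoly p) z = 0"
  then show im: "Im z = 0" by (rule assms(3))
  then have "poly p (Re z) = 0"
    using root by (metis complex_is_Real_iff of_real_Re of_real_eq_0_iff poly_cpoly_of_real)
  then show "Re z \<le> 0"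
    using nonneg_coeffs_poly_pos[OF assms(1,2), of "Re z"] by (cases "0 < Re z") auto
qed

lemma nonpos_rootedI_upper:
  assumes "nonneg_coeffs p" "p \<noteq> 0" "\<And>z. 0 < Im z \<Longrightarrow> poly (cpoly p) z \<noteq> 0"
  shows "nonpos_rooted p"
proof (rule nonpos_rootedI[OF assms(1,2)])
  fix z assume "poly (cpoly p) z = 0"
  moreover from this have "poly (cpoly p) (cnj z) = 0"
    by (simp add: poly_cpoly_cnj)
  ultimately show "Im z = 0"
    using assms(3)[of z] assms(3)[of "cnj z"] by force
qed

lemma norm_linear_prod_mono_Im:
  assumes "\<bar>y\<bar> \<le> \<bar>y'\<bar>"
  shows "cmod (\<Prod>\<rho>\<leftarrow>rs. Complex x y - of_real \<rho>) \<le> cmod (\<Prod>\<rho>\<leftarrow>rs. Complex x y' - of_real \<rho>)"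
proof (induction rs)
  case (Cons \<rho> rs)
  have "(x - \<rho>)\<^sup>2 + y\<^sup>2 \<le> (x - \<rho>)\<^sup>2 + y'\<^sup>2"
    using assms by (simp add: abs_le_square_iff)
  then have "cmod (Complex x y - of_real \<rho>) \<le> cmod (Complex x y' - of_real \<rho>)"
    by (simp add: cmod_def)
  with Cons show ?case
    by (simp add: norm_mult mult_mono)
qed simp

lemma nonpos_rooted_norm_mono_Im:
  assumes "nonpos_rooted p" "\<bar>y\<bar> \<le> \<bar>y'\<bar>"
  shows "cmod (poly (cpoly p) (Complex x y)) \<le> cmod (poly (cpoly p) (Complex x y'))"
proof (cases "p = 0")
  case False
  with assms(1) obtain c rs where "p = smult c (\<Prod>\<rho>\<leftarrow>rs. [:-\<rho>, 1:])"
    by (rule nonpos_rooted_factor)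
  then show ?thesis
    using norm_linear_prod_mono_Im[OF assms(2)]
    by (simp add: poly_cpoly_linear_prod norm_mult mult_left_mono)
qed simp

lemma real_zero_if_norm_mono_Im:
  fixes q :: "complex poly"
  assumes "q \<noteq> 0"
    and "\<And>x y y'. \<bar>y\<bar> \<le> \<bar>y'\<bar> \<Longrightarrow> cmod (poly q (Complex x y)) \<le> cmod (poly q (Complex x y'))"
    and "poly q z = 0"
  shows "Im z = 0"
proof (rule ccontr)
  assume "Im z \<noteq> 0"
  have "poly q (Complex (Re z) y) = 0" if "y \<in> {0..\<bar>Im z\<bar>}" for y
    using assms(2)[of y "Im z" "Re z"] that assms(3) by auto
  then have "Complex (Re z) ` {0..\<bar>Im z\<bar>} \<subseteq> {w. poly q w = 0}"
    by auto
  moreover have "infinite (Complex (Re z) ` {0..\<bar>Im z\<bar>})"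
    using \<open>Im z \<noteq> 0\<close> by (auto simp: finite_image_iff inj_on_def)
  ultimately show False
    using poly_roots_finite[OF assms(1)] finite_subset by blast
qed

lemma norm_le_of_two_weight:
  fixes u v u' v' :: complex
  assumes "\<And>t. 0 < t \<Longrightarrow> cmod (of_real t * u + v) \<le> cmod (of_real t * u' + v')"
  shows "cmod u \<le> cmod u'" "cmod v \<le> cmod v'"
proof -
  have "\<forall>\<^sub>F t in at_top. cmod (u + v / of_real t) \<le> cmod (u' + v' / of_real t)"
    using eventually_gt_at_top[of 0]
  proof eventually_elim
    case (elim t)
    have "cmod (u + v / of_real t) = cmod (of_real t * u + v) / t"
      using elim by (simp add: field_simps norm_divide)
    also have "\<dots> \<le> cmod (of_real t * u' + v') / t"
      using assms[OF elim] elim by (simp add: divide_right_mono)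
    also have "\<dots> = cmod (u' + v' / of_real t)"
      using elim by (simp add: field_simps norm_divide)
    finally show ?case .
  qed
  moreover have lim: "((\<lambda>t. cmod (w + w' / of_real t)) \<longlongrightarrow> cmod w) at_top" for w w' :: complex
    using tendsto_norm[OF tendsto_add[OF tendsto_const
        tendsto_divide_0[OF tendsto_const filterlim_of_real_at_infinity]]] by simp
  ultimately show "cmod u \<le> cmod u'"
    using tendsto_le[OF trivial_limit_at_top_linorder lim lim] by blast
  have "\<forall>\<^sub>F t in at_right 0. cmod (of_real t * u + v) \<le> cmod (of_real t * u' + v')"
    using eventually_at_right_less[of 0] by eventually_elim (rule assms)
  moreover have lim: "((\<lambda>t. cmod (of_real t * w + w')) \<longlongrightarrow> cmod w') (at_right 0)" for w w' :: complex
    using tendsto_norm[OF tendsto_add[OF tendsto_mult[OF tendsto_of_real[OF tendsto_ident_at[of 0 "{0<..}"]]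
          tendsto_const] tendsto_const]] by simp
  ultimately show "cmod v \<le> cmod v'"
    using tendsto_le[OF trivial_limit_at_right_real lim lim] by blast
qed

section \<open>Interpolatory pairs\<close>

text \<open>The 1-cube with entry a at 1 and b at 0: the two conditions are its interpolations
  for the flip sets S = {} and S = {1}.\<close>
definition interp_pair :: "real poly \<Rightarrow> real poly \<Rightarrow> bool" where
  "interp_pair a b \<longleftrightarrow> (\<forall>s t. 0 < s \<longrightarrow> 0 < t \<longrightarrow>
     nonpos_rooted (smult s a + smult t b) \<and> nonpos_rooted (smult s b + smult t ([:0, 1:] * a)))"

lemma interp_pair_nonneg_coeffs:
  assumes "interp_pair a b"
  shows "nonneg_coeffs a" "nonneg_coeffs b"
proof -
  have comb: "\<And>s t. 0 < s \<Longrightarrow> 0 < t \<Longrightarrow> nonneg_coeffs (smult s a + smult t b)"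
    using assms by (simp add: interp_pair_def nonpos_rooted_nonneg_coeffs)
  show "nonneg_coeffs a" "nonneg_coeffs b"
    using nonneg_coeffs_of_two_weight[OF comb] by auto
qed

text \<open>Along vertical lines the modulus of a real-rooted polynomial grows with the distance
  to the real axis; this survives the limits t \<rightarrow> \<infinity> and t \<rightarrow> 0 in t a + b and then forces
  the zeros of a and b onto the real axis.\<close>
lemma interp_pair_nonpos_rooted:
  assumes pair: "interp_pair a b" and "a \<noteq> 0"
  shows "nonpos_rooted a" "nonpos_rooted b"
proof -
  have mono: "cmod (poly (cpoly a) (Complex x y)) \<le> cmod (poly (cpoly a) (Complex x y'))
      \<and> cmod (poly (cpoly b) (Complex x y)) \<le> cmod (poly (cpoly b) (Complex x y'))"
    if "\<bar>y\<bar> \<le> \<bar>y'\<bar>" for x y y'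
  proof -
    have "cmod (of_real t * poly (cpoly a) (Complex x y) + poly (cpoly b) (Complex x y))
        \<le> cmod (of_real t * poly (cpoly a) (Complex x y') + poly (cpoly b) (Complex x y'))"
      if "0 < t" for t
    proof -
      have "nonpos_rooted (smult t a + smult 1 b)"
        using pair \<open>0 < t\<close> zero_less_one unfolding interp_pair_def by blast
      from nonpos_rooted_norm_mono_Im[OF this \<open>\<bar>y\<bar> \<le> \<bar>y'\<bar>\<close>, of x] show ?thesis
        by simp
    qed
    from norm_le_of_two_weight[OF this] show ?thesis ..
  qed
  have real_zeros: "Im z = 0" if "p \<in> {a, b}" "p \<noteq> 0" "poly (cpoly p) z = 0" for p z
  proof (rule real_zero_if_norm_mono_Im[OF _ _ that(3)])
    show "cpoly p \<noteq> 0"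
      using that(2) by (simp add: map_poly_eq_0_iff)
    show "cmod (poly (cpoly p) (Complex x y)) \<le> cmod (poly (cpoly p) (Complex x y'))"
      if "\<bar>y\<bar> \<le> \<bar>y'\<bar>" for x y y'
      using mono[OF that] \<open>p \<in> {a, b}\<close> by auto
  qed
  show "nonpos_rooted a"
    by (rule nonpos_rootedI[OF interp_pair_nonneg_coeffs(1)[OF pair] \<open>a \<noteq> 0\<close>])
      (rule real_zeros; simp add: \<open>a \<noteq> 0\<close>)
  show "nonpos_rooted b"
  proof (cases "b = 0")
    case False
    show ?thesis
      by (rule nonpos_rootedI[OF interp_pair_nonneg_coeffs(2)[OF pair] False])
        (rule real_zeros; simp add: False)
  qed simp
qed

section \<open>A continuous argument on the closed upper half-plane\<close>

text \<open>A branch of the argument with values in ]-pi/2, 3pi/2] and cut along the negative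
  imaginary axis: unlike Arg it is continuous up to the negative real axis from above,
  where it equals pi.\<close>
definition arg_uhp :: "complex \<Rightarrow> real" where
  "arg_uhp w = pi / 2 + Arg (- \<i> * w)"

lemma rcis_arg_uhp: "rcis (cmod w) (arg_uhp w) = w"
proof -
  have "rcis (cmod w) (arg_uhp w) = rcis 1 (pi / 2) * rcis (cmod (- \<i> * w)) (Arg (- \<i> * w))"
    by (simp add: arg_uhp_def rcis_mult norm_mult)
  also have "\<dots> = \<i> * (- \<i> * w)"
    by (simp only: rcis_cmod_Arg) (simp add: rcis_def)
  finally show ?thesis by simp
qed

lemma arg_uhp_eq_arctan: "0 < Im w \<Longrightarrow> arg_uhp w = pi / 2 - arctan (Re w / Im w)"
  by (simp add: arg_uhp_def arg_conv_arctan arctan_minus)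

lemma arg_uhp_bounds: "0 < Im w \<Longrightarrow> 0 < arg_uhp w \<and> arg_uhp w < pi"
  using arctan_lbound[of "Re w / Im w"] arctan_ubound[of "Re w / Im w"]
  by (simp add: arg_uhp_eq_arctan)

lemma arg_uhp_eq_Arg: "0 < Im w \<Longrightarrow> arg_uhp w = Arg w"
  using arg_uhp_bounds[of w] rcis_arg_uhp[of w] by (intro Arg_unique'[symmetric, of "cmod w"]) auto

lemma arg_uhp_add_real_le: "0 < Im w \<Longrightarrow> 0 \<le> d \<Longrightarrow> arg_uhp (w + of_real d) \<le> arg_uhp w"
  by (simp add: arg_uhp_eq_arctan arctan_le_iff divide_right_mono)

lemma arg_uhp_of_real_pos: "0 < x \<Longrightarrow> arg_uhp (of_real x) = 0"
  using Arg_times_of_real[of x "- \<i>"] by (simp add: arg_uhp_def mult.commute)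

lemma arg_uhp_of_real_neg: "x < 0 \<Longrightarrow> arg_uhp (of_real x) = pi"
  using Arg_times_of_real[of "- x" \<i>] by (simp add: arg_uhp_def mult.commute)

lemma isCont_arg_uhp:
  assumes "0 \<le> Im w" "w \<noteq> 0"
  shows "isCont arg_uhp w"
proof -
  have "- \<i> * w \<notin> \<real>\<^sub>\<le>\<^sub>0"
    using assms by (auto simp: complex_nonpos_Reals_iff complex_eq_iff)
  then have "isCont Arg (- \<i> * w)"
    by (rule continuous_at_Arg)
  then have "isCont (\<lambda>w. Arg (- \<i> * w)) w"
    by (rule isCont_o2[rotated]) (intro continuous_intros)
  then show ?thesis
    unfolding arg_uhp_def[abs_def] by (intro continuous_intros)
qed

lemma cnj_eq_rcis_arg_uhp: "cnj w = rcis (cmod w) (- arg_uhp w)"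
  by (subst (1) rcis_arg_uhp[symmetric]) (simp add: rcis_def cis_cnj)

lemma prod_list_eq_rcis:
  "(\<Prod>x\<leftarrow>xs. f x) = rcis (\<Prod>x\<leftarrow>xs. cmod (f x)) (\<Sum>x\<leftarrow>xs. arg_uhp (f x))"
proof (induction xs)
  case (Cons x xs)
  have "(\<Prod>x\<leftarrow>x # xs. f x) = rcis (cmod (f x)) (arg_uhp (f x)) * (\<Prod>x\<leftarrow>xs. f x)"
    by (simp add: rcis_arg_uhp)
  with Cons show ?case
    by (simp add: rcis_mult)
qed simp

definition arg_sum :: "real list \<Rightarrow> complex \<Rightarrow> real" where
  "arg_sum rs z = (\<Sum>\<rho>\<leftarrow>rs. arg_uhp (z - of_real \<rho>))"

lemma linear_prod_quotient_eq_rcis: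
  assumes "0 < Im z" "0 < c" "0 < c'"
  obtains m where "0 < m"
    "poly (cpoly (smult c' (\<Prod>\<rho>\<leftarrow>ss. [:-\<rho>, 1:]))) z / poly (cpoly (smult c (\<Prod>\<rho>\<leftarrow>rs. [:-\<rho>, 1:]))) z
       = rcis m (arg_sum ss z - arg_sum rs z)"
proof -
  have pos: "0 < (\<Prod>\<rho>\<leftarrow>xs. cmod (z - of_real \<rho>))" for xs
    using assms(1) by (induction xs) (auto simp: complex_eq_iff)
  have eq: "poly (cpoly (smult c (\<Prod>\<rho>\<leftarrow>xs. [:-\<rho>, 1:]))) z
      = rcis (c * (\<Prod>\<rho>\<leftarrow>xs. cmod (z - of_real \<rho>))) (arg_sum xs z)" for c xs
    by (simp add: poly_cpoly_linear_prod prod_list_eq_rcis arg_sum_def rcis_def)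
  show thesis
  proof (rule that)
    show "0 < c' * (\<Prod>\<rho>\<leftarrow>ss. cmod (z - of_real \<rho>)) / (c * (\<Prod>\<rho>\<leftarrow>rs. cmod (z - of_real \<rho>)))"
      using pos assms(2,3) by simp
  qed (simp only: eq rcis_divide)
qed

lemma arg_sum_Cons: "arg_sum (\<rho> # rs) = (\<lambda>z. arg_uhp (z - of_real \<rho>) + arg_sum rs z)"
  by (simp add: arg_sum_def fun_eq_iff)

lemma isCont_arg_sum:
  assumes "0 \<le> Im z"
  shows "\<forall>\<rho>\<in>set rs. z \<noteq> of_real \<rho> \<Longrightarrow> isCont (arg_sum rs) z"
proof (induction rs)
  case (Cons \<rho> rs)
  have "isCont arg_uhp (z - of_real \<rho>)"
    using assms Cons.prems by (intro isCont_arg_uhp) auto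
  then have "isCont (\<lambda>z. arg_uhp (z - of_real \<rho>)) z"
    by (rule isCont_o2[rotated]) (intro continuous_intros)
  with Cons show ?case
    unfolding arg_sum_Cons by (intro isCont_add) auto
qed (simp add: arg_sum_def[abs_def])

section \<open>Interlacing\<close>

definition count_above :: "real list \<Rightarrow> real \<Rightarrow> nat" where
  "count_above rs x = length (filter (\<lambda>\<rho>. x < \<rho>) rs)"

lemma count_above_remove1:
  "r \<in> set rs \<Longrightarrow> count_above rs x = count_above (remove1 r rs) x + (if x < r then 1 else 0)"
  unfolding count_above_def by (induction rs) auto

lemma count_above_eq_0: "\<forall>\<rho>\<in>set rs. \<rho> \<le> x \<Longrightarrow> count_above rs x = 0"
  unfolding count_above_def by (induction rs) auto

lemma count_above_eq_length: "\<forall>\<rho>\<in>set rs. x < \<rho> \<Longrightarrow> count_above rs x = length rs"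
  unfolding count_above_def by (induction rs) auto

lemma count_above_pos: "\<rho> \<in> set rs \<Longrightarrow> x < \<rho> \<Longrightarrow> 0 < count_above rs x"
  unfolding count_above_def by (induction rs) auto

lemma arg_sum_of_real:
  "x \<notin> set rs \<Longrightarrow> arg_sum rs (of_real x) = pi * count_above rs x"
proof (induction rs)
  case (Cons \<rho> rs)
  have "arg_uhp (of_real (x - \<rho>)) = (if x < \<rho> then pi else 0)"
    using Cons.prems arg_uhp_of_real_pos[of "x - \<rho>"] arg_uhp_of_real_neg[of "x - \<rho>"] by auto
  with Cons show ?case
    by (simp add: arg_sum_def count_above_def algebra_simps)
qed (simp add: arg_sum_def count_above_def)

text \<open>Sorted decreasingly, ss and rs alternate as s1 \<ge> r1 \<ge> s2 \<ge> r2 \<ge> \<dots>\<close>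
definition interlaced :: "real list \<Rightarrow> real list \<Rightarrow> bool" where
  "interlaced ss rs \<longleftrightarrow>
     (\<forall>x. count_above rs x \<le> count_above ss x \<and> count_above ss x \<le> count_above rs x + 1)"

lemma interlacedI_cofinite:
  assumes "finite F"
    and "\<And>x. x \<notin> F \<Longrightarrow> count_above rs x \<le> count_above ss x \<and> count_above ss x \<le> count_above rs x + 1"
  shows "interlaced ss rs"
  unfolding interlaced_def
proof
  fix x
  define M where "M = insert (x + 1) {\<rho> \<in> set ss \<union> set rs. x < \<rho>}"
  have "finite M" by (simp add: M_def)
  then have "x < Min M"
    by (auto simp: M_def)
  then have "\<not> {x<..<Min M} \<subseteq> F"
    using assms(1) finite_subset infinite_Ioo by blast
  then obtain y where "y \<in> {x<..<Min M}" "y \<notin> F"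
    by blast
  then have y: "x < y" "y < Min M" "y \<notin> F"
    by simp_all
  have same: "count_above xs y = count_above xs x" if "set xs \<subseteq> set ss \<union> set rs" for xs
    unfolding count_above_def
  proof (rule arg_cong[where f = length], rule filter_cong[OF refl])
    fix \<rho> assume "\<rho> \<in> set xs"
    with that have "x < \<rho> \<Longrightarrow> Min M \<le> \<rho>"
      using Min_le[OF \<open>finite M\<close>, of \<rho>] by (auto simp: M_def)
    with y show "(y < \<rho>) = (x < \<rho>)" by auto
  qed
  show "count_above rs x \<le> count_above ss x \<and> count_above ss x \<le> count_above rs x + 1"
    using assms(2)[OF y(3)] same[of ss] same[of rs] by simp
qed

lemma interlaced_Nil_left: "interlaced [] rs \<Longrightarrow> rs = []"
proof (rule ccontr)
  assume "interlaced [] rs" "rs \<noteq> []"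
  then obtain \<rho> where "\<rho> \<in> set rs"
    using last_in_set by blast
  then have "0 < count_above rs (\<rho> - 1)"
    by (rule count_above_pos) simp
  with \<open>interlaced [] rs\<close> show False
    by (auto simp: interlaced_def count_above_def dest: spec[of _ "\<rho> - 1"])
qed

lemma interlaced_Nil_right: "interlaced ss [] \<Longrightarrow> length ss \<le> 1"
proof (cases "ss = []")
  case False
  assume "interlaced ss []"
  have "Min (set ss) - 1 < \<rho>" if "\<rho> \<in> set ss" for \<rho>
    using Min_le[OF finite_set that] by simp
  then have "count_above ss (Min (set ss) - 1) = length ss"
    by (intro count_above_eq_length) auto
  with \<open>interlaced ss []\<close> show ?thesis
    by (auto simp: interlaced_def count_above_def dest: spec[of _ "Min (set ss) - 1"])
qed simp

lemma interlaced_count_above: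
  "interlaced ss rs \<Longrightarrow> count_above rs x \<le> count_above ss x"
  "interlaced ss rs \<Longrightarrow> count_above ss x \<le> count_above rs x + 1"
  by (simp_all add: interlaced_def)

lemma interlaced_Max_le:
  assumes "interlaced ss rs" "ss \<noteq> []" "rs \<noteq> []"
  shows "Max (set rs) \<le> Max (set ss)"
proof (rule ccontr)
  assume "\<not> Max (set rs) \<le> Max (set ss)"
  have "Max (set rs) \<in> set rs"
    using assms(3) by simp
  then have "0 < count_above rs (Max (set ss))"
    by (rule count_above_pos) (use \<open>\<not> Max (set rs) \<le> Max (set ss)\<close> in linarith)
  moreover have "count_above ss (Max (set ss)) = 0"
    by (rule count_above_eq_0) simp
  ultimately show False
    using interlaced_count_above(1)[OF assms(1), of "Max (set ss)"] by simp
qed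

lemma interlaced_remove1_Max_le:
  assumes "interlaced ss rs" "ss \<noteq> []" "rs \<noteq> []"
  shows "\<forall>s\<in>set (remove1 (Max (set ss)) ss). s \<le> Max (set rs)"
proof (rule ccontr)
  define s r where "s = Max (set ss)" and "r = Max (set rs)"
  assume "\<not> (\<forall>s'\<in>set (remove1 (Max (set ss)) ss). s' \<le> Max (set rs))"
  then obtain s' where s': "s' \<in> set (remove1 s ss)" "r < s'"
    by (auto simp: s_def r_def)
  have "s' \<in> set ss"
    using s'(1) set_remove1_subset by fast
  then have "s' \<le> s"
    by (simp add: s_def)
  with s'(2) have "r < s"
    by simp
  have "s \<in> set ss"
    using assms(2) by (simp add: s_def)
  then have "count_above ss r = count_above (remove1 s ss) r + 1"
    using count_above_remove1[of s ss r] \<open>r < s\<close> by simp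
  moreover have "0 < count_above (remove1 s ss) r"
    using s' by (rule count_above_pos)
  moreover have "count_above rs r = 0"
    using assms(3) by (intro count_above_eq_0) (simp add: r_def)
  ultimately show False
    using interlaced_count_above(2)[OF assms(1), of r] by simp
qed

lemma interlaced_remove1_Max:
  assumes "interlaced ss rs" "ss \<noteq> []" "rs \<noteq> []"
  shows "interlaced (remove1 (Max (set ss)) ss) (remove1 (Max (set rs)) rs)"
  unfolding interlaced_def
proof
  fix x
  define s r where "s = Max (set ss)" and "r = Max (set rs)"
  have ss: "count_above ss x = count_above (remove1 s ss) x + (if x < s then 1 else 0)"
    using assms(2) by (intro count_above_remove1) (simp add: s_def)
  have rs: "count_above rs x = count_above (remove1 r rs) x + (if x < r then 1 else 0)"
    using assms(3) by (intro count_above_remove1) (simp add: r_def)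
  show "count_above (remove1 r rs) x \<le> count_above (remove1 s ss) x
      \<and> count_above (remove1 s ss) x \<le> count_above (remove1 r rs) x + 1"
  proof (cases "x < r")
    case True
    with interlaced_Max_le[OF assms] show ?thesis
      using ss rs interlaced_count_above[OF assms(1), of x] by (auto simp: s_def r_def)
  next
    case False
    then have "count_above (remove1 s ss) x = 0"
      using interlaced_remove1_Max_le[OF assms] by (intro count_above_eq_0) (auto simp: s_def r_def)
    moreover have "\<rho> \<le> x" if "\<rho> \<in> set rs" for \<rho>
    proof -
      have "\<rho> \<le> r"
        using that by (simp add: r_def)
      with False show ?thesis by simp
    qed
    then have "count_above rs x = 0"
      by (simp add: count_above_eq_0)
    ultimately show ?thesis
      using rs by simp
  qed
qed

lemma sum_list_interlaced:
  fixes g :: "real \<Rightarrow> real"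
  assumes "mono g" "\<And>x. 0 \<le> g x" "interlaced ss rs"
  shows "0 \<le> (\<Sum>s\<leftarrow>ss. g s) - (\<Sum>r\<leftarrow>rs. g r)
    \<and> (\<forall>u. (\<forall>s\<in>set ss. s \<le> u) \<longrightarrow> (\<Sum>s\<leftarrow>ss. g s) - (\<Sum>r\<leftarrow>rs. g r) \<le> g u)"
  using assms(3)
proof (induction "length ss + length rs" arbitrary: ss rs rule: less_induct)
  case less
  consider "ss = []" | "ss \<noteq> []" "rs = []" | "ss \<noteq> []" "rs \<noteq> []"
    by blast
  then show ?case
  proof cases
    case 1
    with less.prems have "rs = []"
      by (simp add: interlaced_Nil_left)
    with 1 show ?thesis
      using assms(2) by simp
  next
    case 2
    with less.prems have "length ss \<le> 1"
      using interlaced_Nil_right by blast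
    with 2 obtain s where "ss = [s]"
      by (cases ss) auto
    with 2 show ?thesis
      using assms(1,2) by (auto dest: monoD)
  next
    case 3
    \<comment> \<open>pair off the largest elements; the rest of ss lies below the largest element of rs\<close>
    define s r where "s = Max (set ss)" and "r = Max (set rs)"
    note removed = interlaced_Max_le[OF less.prems 3, folded s_def r_def]
      interlaced_remove1_Max_le[OF less.prems 3, folded s_def r_def]
      interlaced_remove1_Max[OF less.prems 3, folded s_def r_def]
    have "s \<in> set ss" "r \<in> set rs"
      using 3 by (simp_all add: s_def r_def)
    then have split: "(\<Sum>s\<leftarrow>ss. g s) - (\<Sum>r\<leftarrow>rs. g r)
        = (g s - g r) + ((\<Sum>s\<leftarrow>remove1 s ss. g s) - (\<Sum>r\<leftarrow>remove1 r rs. g r))"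
      by (simp add: sum_list_map_remove1)
    have "length (remove1 s ss) + length (remove1 r rs) < length ss + length rs"
      using \<open>s \<in> set ss\<close> \<open>r \<in> set rs\<close> length_pos_if_in_set[OF \<open>s \<in> set ss\<close>]
        length_pos_if_in_set[OF \<open>r \<in> set rs\<close>]
      by (simp only: length_remove1 if_True)
    from less.hyps[OF this removed(3)] removed(2)
    have IH: "0 \<le> (\<Sum>s\<leftarrow>remove1 s ss. g s) - (\<Sum>r\<leftarrow>remove1 r rs. g r)"
      "(\<Sum>s\<leftarrow>remove1 s ss. g s) - (\<Sum>r\<leftarrow>remove1 r rs. g r) \<le> g r"
      by auto
    have "g r \<le> g s"
      using removed(1) assms(1) by (rule monoD[rotated])
    moreover have "g s \<le> g u" if "\<forall>s\<in>set ss. s \<le> u" for u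
      using that \<open>s \<in> set ss\<close> assms(1) by (auto dest: monoD)
    ultimately show ?thesis
      using split IH by fastforce
  qed
qed

section \<open>The sector property of interpolatory pairs\<close>

lemma connected_less_if_avoids:
  fixes f :: "'a::topological_space \<Rightarrow> real"
  assumes "connected U" "continuous_on U f" "\<And>z. z \<in> U \<Longrightarrow> f z \<noteq> c"
    and "z0 \<in> U" "f z0 < c" "z \<in> U"
  shows "f z < c"
proof (rule ccontr)
  assume "\<not> f z < c"
  have "connected (f ` U)"
    using assms(2,1) by (rule connected_continuous_image)
  then have "c \<in> f ` U"
    by (rule connectedD_interval[of _ "f z0" "f z"]) (use assms \<open>\<not> f z < c\<close> in auto)
  with assms(3) show False by auto
qed

lemma le_at_real_if_le_upper:
  fixes f :: "complex \<Rightarrow> real"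
  assumes "isCont f (of_real x)" "\<And>z. 0 < Im z \<Longrightarrow> f z \<le> c"
  shows "f (of_real x) \<le> c"
proof (rule tendsto_upperbound)
  have "((\<lambda>e. Complex x e) \<longlongrightarrow> of_real x) (at_right 0)"
    using tendsto_Complex[OF tendsto_const tendsto_ident_at[of 0 "{0<..}"], of x]
    by (simp add: complex_of_real_def)
  then show "((\<lambda>e. f (Complex x e)) \<longlongrightarrow> f (of_real x)) (at_right 0)"
    by (rule isCont_tendsto_compose[OF assms(1)])
  show "\<forall>\<^sub>F e in at_right 0. f (Complex x e) \<le> c"
    using eventually_at_right_less[of 0] by eventually_elim (simp add: assms(2))
qed simp

lemma arg_uhp_diff_nonpos_bounds:
  "0 < Im w \<Longrightarrow> \<rho> \<le> 0 \<Longrightarrow> 0 < arg_uhp (w - of_real \<rho>) \<and> arg_uhp (w - of_real \<rho>) \<le> arg_uhp w"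
  using arg_uhp_bounds[of "w - of_real \<rho>"] arg_uhp_add_real_le[of w "- \<rho>"] by simp

lemma arg_sum_bounds:
  assumes "0 < Im w"
  shows "\<forall>\<rho>\<in>set rs. \<rho> \<le> 0 \<Longrightarrow> 0 \<le> arg_sum rs w \<and> arg_sum rs w \<le> length rs * arg_uhp w"
proof (induction rs)
  case (Cons \<rho> rs)
  then show ?case
    using arg_uhp_diff_nonpos_bounds[OF assms, of \<rho>] by (auto simp: arg_sum_Cons algebra_simps)
qed (simp add: arg_sum_def)

lemma interp_pair_quotient_avoids_rays:
  assumes "interp_pair a b" "a \<noteq> 0" "0 < Im z" "0 < t"
  shows "poly (cpoly b) z \<noteq> - of_real t * poly (cpoly a) z"
    and "poly (cpoly b) z \<noteq> - of_real t * z * poly (cpoly a) z"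
proof -
  note nonneg = interp_pair_nonneg_coeffs[OF assms(1)]
  have no_upper_zero: "poly (cpoly p) z \<noteq> 0" if "nonpos_rooted p" "p \<noteq> 0" for p
    using nonpos_rooted_real_zero[OF that] assms(3) by auto
  define p q where "p = smult t a + smult 1 b" and "q = smult 1 b + smult t ([:0, 1:] * a)"
  have "nonpos_rooted p" "nonpos_rooted q"
    using assms(1,4) zero_less_one unfolding interp_pair_def p_def q_def by blast+
  moreover have "p \<noteq> 0"
    using nonneg_coeffs_comb_nonzero[OF nonneg assms(2,4), of 1] by (simp add: p_def)
  moreover have "q \<noteq> 0"
    using nonneg_coeffs_comb_nonzero[OF nonneg_coeffs_mult[OF nonneg_coeffs_linear nonneg(1)]
        nonneg(2) _ assms(4), of 0 1 1] assms(2) by (simp add: q_def add.commute)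
  ultimately have "poly (cpoly p) z \<noteq> 0" "poly (cpoly q) z \<noteq> 0"
    by (simp_all add: no_upper_zero)
  then show "poly (cpoly b) z \<noteq> - of_real t * poly (cpoly a) z"
    "poly (cpoly b) z \<noteq> - of_real t * z * poly (cpoly a) z"
    by (auto simp: p_def q_def)
qed

lemma arg_sum_diff_avoids:
  assumes "interp_pair a b" "a \<noteq> 0" "0 < Im z"
    and "0 < c" "a = smult c (\<Prod>\<rho>\<leftarrow>rs. [:-\<rho>, 1:])"
    and "0 < c'" "b = smult c' (\<Prod>\<rho>\<leftarrow>ss. [:-\<rho>, 1:])"
  shows "arg_sum ss z - arg_sum rs z \<noteq> pi" "arg_sum ss z - arg_sum rs z \<noteq> arg_uhp z - pi"
proof -
  define \<theta> where "\<theta> = arg_sum ss z - arg_sum rs z"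
  obtain m where m: "0 < m" "poly (cpoly b) z / poly (cpoly a) z = rcis m \<theta>"
    using linear_prod_quotient_eq_rcis[OF assms(3,4,6), of ss rs] by (auto simp flip: assms(5,7) \<theta>_def)
  have "poly (cpoly a) z \<noteq> 0"
    using nonpos_rooted_real_zero[OF interp_pair_nonpos_rooted(1)[OF assms(1,2)] assms(2)] assms(3)
    by auto
  with m(2) have b: "poly (cpoly b) z = rcis m \<theta> * poly (cpoly a) z"
    by (simp add: field_simps)
  show "\<theta> \<noteq> pi"
  proof
    assume "\<theta> = pi"
    with b have "poly (cpoly b) z = - of_real m * poly (cpoly a) z"
      by (simp add: rcis_def)
    with interp_pair_quotient_avoids_rays(1)[OF assms(1-3) m(1)] show False ..
  qed
  show "\<theta> \<noteq> arg_uhp z - pi"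
  proof
    assume "\<theta> = arg_uhp z - pi"
    have "z \<noteq> 0"
      using assms(3) by auto
    have "rcis m (arg_uhp z - pi) = - rcis m (arg_uhp z)"
      by (simp add: rcis_def cis_def complex_eq_iff)
    also have "rcis m (arg_uhp z) = rcis (m / cmod z * cmod z) (arg_uhp z)"
      using \<open>z \<noteq> 0\<close> by simp
    also have "\<dots> = of_real (m / cmod z) * rcis (cmod z) (arg_uhp z)"
      by (simp only: rcis_def of_real_mult mult.assoc)
    finally have "poly (cpoly b) z = - of_real (m / cmod z) * z * poly (cpoly a) z"
      using b \<open>\<theta> = arg_uhp z - pi\<close> by (simp add: rcis_arg_uhp)
    moreover have "0 < m / cmod z"
      using m(1) \<open>z \<noteq> 0\<close> by simp
    ultimately show False
      using interp_pair_quotient_avoids_rays(2)[OF assms(1-3)] by blast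
  qed
qed

lemma arg_sum_diff_strip_at_cis:
  assumes "\<forall>\<rho>\<in>set ss. \<rho> \<le> 0" "\<forall>\<rho>\<in>set rs. \<rho> \<le> 0"
  obtains z1 where "0 < Im z1"
    "arg_uhp z1 - pi < arg_sum ss z1 - arg_sum rs z1" "arg_sum ss z1 - arg_sum rs z1 < pi"
proof -
  define n where "n = length ss + length rs + 2"
  have "2 \<le> real n"
    by (simp add: n_def)
  then have "pi * 1 < pi * real n"
    by (intro mult_strict_left_mono) auto
  then have d: "0 < pi / n" "pi / n < pi" "real n * (pi / n) = pi"
    by (simp_all add: n_def divide_less_eq)
  then have z1: "0 < Im (cis (pi / n))" "arg_uhp (cis (pi / n)) = pi / n"
    by (simp_all add: sin_gt_zero arg_uhp_eq_Arg Arg_cis)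
  have "(real (length rs) + 1) * (pi / n) < real n * (pi / n)"
    "real (length ss) * (pi / n) < real n * (pi / n)"
    using d(1) by (intro mult_strict_right_mono; simp add: n_def)+
  then have "real (length rs) * (pi / n) + pi / n < pi" "real (length ss) * (pi / n) < pi"
    by (simp_all only: distrib_right mult_1_left d(3))
  moreover have "0 \<le> arg_sum ss (cis (pi / n))" "arg_sum ss (cis (pi / n)) \<le> length ss * (pi / n)"
    "0 \<le> arg_sum rs (cis (pi / n))" "arg_sum rs (cis (pi / n)) \<le> length rs * (pi / n)"
    using arg_sum_bounds[OF z1(1)] assms z1(2) by auto
  ultimately show thesis
    using that[OF z1(1)] z1(2) by linarith
qed

lemma arg_sum_diff_strip:
  assumes avoids: "\<And>z. 0 < Im z \<Longrightarrow>
      arg_sum ss z - arg_sum rs z \<noteq> pi \<and> arg_sum ss z - arg_sum rs z \<noteq> arg_uhp z - pi"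
    and roots: "\<forall>\<rho>\<in>set ss \<union> set rs. \<rho> \<le> 0" and "0 < Im z"
  shows "arg_uhp z - pi < arg_sum ss z - arg_sum rs z" "arg_sum ss z - arg_sum rs z < pi"
proof -
  obtain z1 where z1: "0 < Im z1"
    "arg_uhp z1 - pi < arg_sum ss z1 - arg_sum rs z1" "arg_sum ss z1 - arg_sum rs z1 < pi"
    using roots by (auto intro: arg_sum_diff_strip_at_cis[of ss rs])
  have cont: "continuous_on {z. 0 < Im z} (\<lambda>z. arg_sum ss z - arg_sum rs z)"
    "continuous_on {z. 0 < Im z} (\<lambda>z. arg_uhp z - (arg_sum ss z - arg_sum rs z))"
    by (auto intro!: continuous_at_imp_continuous_on continuous_intros isCont_arg_sum isCont_arg_uhp)
  have avoid: "w \<in> {z. 0 < Im z} \<Longrightarrow> arg_sum ss w - arg_sum rs w \<noteq> pi"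
    "w \<in> {z. 0 < Im z} \<Longrightarrow> arg_uhp w - (arg_sum ss w - arg_sum rs w) \<noteq> pi" for w
    using avoids[of w] by auto
  show "arg_sum ss z - arg_sum rs z < pi"
    using connected_less_if_avoids[OF connected_halfspace_Im_gt cont(1) avoid(1), of z1 z]
      z1 \<open>0 < Im z\<close> by simp
  have "arg_uhp z - (arg_sum ss z - arg_sum rs z) < pi"
    using connected_less_if_avoids[OF connected_halfspace_Im_gt cont(2) avoid(2), of z1 z]
      z1 \<open>0 < Im z\<close> by simp
  then show "arg_uhp z - pi < arg_sum ss z - arg_sum rs z"
    by simp
qed

lemma interlaced_if_strip:
  assumes strip: "\<And>z. 0 < Im z \<Longrightarrow>
      arg_uhp z - pi < arg_sum ss z - arg_sum rs z \<and> arg_sum ss z - arg_sum rs z < pi"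
    and roots: "\<forall>\<rho>\<in>set ss \<union> set rs. \<rho> \<le> 0"
  shows "interlaced ss rs"
proof (rule interlacedI_cofinite[of "insert 0 (set ss \<union> set rs)"])
  fix x assume x: "x \<notin> insert 0 (set ss \<union> set rs)"
  show "count_above rs x \<le> count_above ss x \<and> count_above ss x \<le> count_above rs x + 1"
  proof (cases "0 < x")
    case True
    then have "\<forall>\<rho>\<in>set ss. \<rho> \<le> x" "\<forall>\<rho>\<in>set rs. \<rho> \<le> x"
      using roots by force+
    then have "count_above ss x = 0" "count_above rs x = 0"
      by (simp_all add: count_above_eq_0)
    then show ?thesis by simp
  next
    case False
    with x have "x < 0" by auto
    have cont: "isCont (\<lambda>z. arg_sum ss z - arg_sum rs z) (of_real x)"
      "isCont (\<lambda>z. arg_uhp z - (arg_sum ss z - arg_sum rs z)) (of_real x)"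
      using x by (auto intro!: continuous_intros isCont_arg_sum isCont_arg_uhp)
    have "arg_sum ss (of_real x) - arg_sum rs (of_real x) \<le> pi"
      by (rule le_at_real_if_le_upper[OF cont(1)]) (use strip in \<open>auto intro: less_imp_le\<close>)
    moreover have "arg_uhp (of_real x) - (arg_sum ss (of_real x) - arg_sum rs (of_real x)) \<le> pi"
      by (rule le_at_real_if_le_upper[OF cont(2)]) (use strip in force)
    ultimately have "pi * 0 \<le> pi * (real (count_above ss x) - count_above rs x)"
      "pi * (real (count_above ss x) - count_above rs x) \<le> pi * 1"
      using x \<open>x < 0\<close> by (auto simp: arg_sum_of_real arg_uhp_of_real_neg algebra_simps)
    then have "0 \<le> real (count_above ss x) - count_above rs x"
      "real (count_above ss x) - count_above rs x \<le> 1"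
      by (simp_all only: mult_le_cancel_left_pos[OF pi_gt_zero])
    then show ?thesis by linarith
  qed
qed simp

lemma arg_sum_diff_sector:
  assumes "interlaced ss rs" "\<forall>s\<in>set ss. s \<le> 0" "0 < Im z"
  shows "0 \<le> arg_sum ss z - arg_sum rs z" "arg_sum ss z - arg_sum rs z \<le> arg_uhp z"
proof -
  define g where "g \<rho> = arg_uhp (z - of_real \<rho>)" for \<rho>
  have "mono g"
  proof
    fix u v :: real assume "u \<le> v"
    then have "arg_uhp ((z - of_real v) + of_real (v - u)) \<le> arg_uhp (z - of_real v)"
      using assms(3) by (intro arg_uhp_add_real_le) auto
    then show "g u \<le> g v"
      by (simp add: g_def algebra_simps)
  qed
  moreover have "0 \<le> g x" for x
    using arg_uhp_bounds[of "z - of_real x"] assms(3) by (simp add: g_def)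
  ultimately have "0 \<le> arg_sum ss z - arg_sum rs z \<and>
      ((\<forall>s\<in>set ss. s \<le> 0) \<longrightarrow> arg_sum ss z - arg_sum rs z \<le> g 0)"
    using sum_list_interlaced[OF _ _ assms(1)] unfolding arg_sum_def g_def by blast
  with assms(2) show "0 \<le> arg_sum ss z - arg_sum rs z" "arg_sum ss z - arg_sum rs z \<le> arg_uhp z"
    by (auto simp: g_def)
qed

text \<open>b(z)/a(z) lies in the closed sector between the rays through 1 and through z.\<close>
definition sector_quotient :: "real poly \<Rightarrow> real poly \<Rightarrow> bool" where
  "sector_quotient a b \<longleftrightarrow> (\<forall>z. 0 < Im z \<longrightarrow> poly (cpoly a) z \<noteq> 0 \<and>
     0 \<le> Im (poly (cpoly b) z / poly (cpoly a) z) \<and>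
     Im (poly (cpoly b) z / poly (cpoly a) z * cnj z) \<le> 0)"

lemma interp_pair_arg_sum_diff_sector:
  assumes pair: "interp_pair a b" and "a \<noteq> 0"
    and a: "0 < c" "\<forall>\<rho>\<in>set rs. \<rho> \<le> 0" "a = smult c (\<Prod>\<rho>\<leftarrow>rs. [:-\<rho>, 1:])"
    and b: "0 < c'" "\<forall>\<rho>\<in>set ss. \<rho> \<le> 0" "b = smult c' (\<Prod>\<rho>\<leftarrow>ss. [:-\<rho>, 1:])"
    and "0 < Im z"
  shows "0 \<le> arg_sum ss z - arg_sum rs z" "arg_sum ss z - arg_sum rs z \<le> arg_uhp z"
proof -
  have roots: "\<forall>\<rho>\<in>set ss \<union> set rs. \<rho> \<le> 0"
    using a(2) b(2) by auto
  have "arg_sum ss w - arg_sum rs w \<noteq> pi \<and> arg_sum ss w - arg_sum rs w \<noteq> arg_uhp w - pi"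
    if "0 < Im w" for w
    using arg_sum_diff_avoids[OF pair \<open>a \<noteq> 0\<close> that a(1,3) b(1,3)] by blast
  then have "arg_uhp w - pi < arg_sum ss w - arg_sum rs w \<and> arg_sum ss w - arg_sum rs w < pi"
    if "0 < Im w" for w
    using arg_sum_diff_strip[OF _ roots that] by blast
  then have "interlaced ss rs"
    using interlaced_if_strip[OF _ roots] by blast
  from arg_sum_diff_sector[OF this b(2) \<open>0 < Im z\<close>]
  show "0 \<le> arg_sum ss z - arg_sum rs z" "arg_sum ss z - arg_sum rs z \<le> arg_uhp z" .
qed

lemma interp_pair_sector_quotient:
  assumes pair: "interp_pair a b" and "a \<noteq> 0"
  shows "sector_quotient a b"
  unfolding sector_quotient_def
proof (intro allI impI)
  fix z :: complex assume z: "0 < Im z"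
  note rooted = interp_pair_nonpos_rooted[OF pair \<open>a \<noteq> 0\<close>]
  have az: "poly (cpoly a) z \<noteq> 0"
    using nonpos_rooted_real_zero[OF rooted(1) \<open>a \<noteq> 0\<close>] z by auto
  show "poly (cpoly a) z \<noteq> 0 \<and> 0 \<le> Im (poly (cpoly b) z / poly (cpoly a) z)
      \<and> Im (poly (cpoly b) z / poly (cpoly a) z * cnj z) \<le> 0"
  proof (cases "b = 0")
    case False
    obtain c rs where a: "0 < c" "\<forall>\<rho>\<in>set rs. \<rho> \<le> 0" "a = smult c (\<Prod>\<rho>\<leftarrow>rs. [:-\<rho>, 1:])"
      using rooted(1) \<open>a \<noteq> 0\<close> by (rule nonpos_rooted_factor)
    obtain c' ss where b: "0 < c'" "\<forall>\<rho>\<in>set ss. \<rho> \<le> 0" "b = smult c' (\<Prod>\<rho>\<leftarrow>ss. [:-\<rho>, 1:])"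
      using rooted(2) False by (rule nonpos_rooted_factor)
    from interp_pair_arg_sum_diff_sector[OF pair \<open>a \<noteq> 0\<close> a b z] arg_uhp_bounds[OF z]
    have sector: "0 \<le> arg_sum ss z - arg_sum rs z" "arg_sum ss z - arg_sum rs z < pi"
      "- pi \<le> arg_sum ss z - arg_sum rs z - arg_uhp z" "arg_sum ss z - arg_sum rs z - arg_uhp z \<le> 0"
      by linarith+
    obtain m where m: "0 < m"
      "poly (cpoly b) z / poly (cpoly a) z = rcis m (arg_sum ss z - arg_sum rs z)"
      using linear_prod_quotient_eq_rcis[OF z a(1) b(1), of ss rs] by (auto simp flip: a(3) b(3))
    have "0 \<le> Im (poly (cpoly b) z / poly (cpoly a) z)"
      using m sector(1,2) by (simp add: sin_ge_zero)
    moreover have "poly (cpoly b) z / poly (cpoly a) z * cnj z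
        = rcis (m * cmod z) (arg_sum ss z - arg_sum rs z - arg_uhp z)"
      by (simp add: m(2) cnj_eq_rcis_arg_uhp rcis_mult)
    moreover have "0 \<le> sin (- (arg_sum ss z - arg_sum rs z - arg_uhp z))"
      using sector(3,4) by (intro sin_ge_zero) linarith+
    then have "sin (arg_sum ss z - arg_sum rs z - arg_uhp z) \<le> 0"
      by (simp only: sin_minus)
    ultimately show ?thesis
      using az m(1) by (simp add: mult_nonneg_nonpos)
  qed (simp add: az)
qed

lemma sector_quotient_add:
  assumes "sector_quotient a b" "sector_quotient a c"
  shows "sector_quotient a (b + c)"
  unfolding sector_quotient_def
proof (intro allI impI)
  fix z :: complex assume "0 < Im z"
  with assms have "poly (cpoly a) z \<noteq> 0"
    "0 \<le> Im (poly (cpoly b) z / poly (cpoly a) z)" "Im (poly (cpoly b) z / poly (cpoly a) z * cnj z) \<le> 0"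
    "0 \<le> Im (poly (cpoly c) z / poly (cpoly a) z)" "Im (poly (cpoly c) z / poly (cpoly a) z * cnj z) \<le> 0"
    unfolding sector_quotient_def by blast+
  then show "poly (cpoly a) z \<noteq> 0 \<and> 0 \<le> Im (poly (cpoly (b + c)) z / poly (cpoly a) z)
      \<and> Im (poly (cpoly (b + c)) z / poly (cpoly a) z * cnj z) \<le> 0"
    by (simp add: add_divide_distrib distrib_right)
qed

lemma sector_quotient_comb_nonpos_rooted:
  assumes nonneg: "nonneg_coeffs a" "nonneg_coeffs b" and "a \<noteq> 0" and sector: "sector_quotient a b"
    and "0 < s" "0 < t"
  shows "nonpos_rooted (smult s a + smult t b)"
proof (rule nonpos_rootedI_upper)
  show "nonneg_coeffs (smult s a + smult t b)"
    using nonneg \<open>0 < s\<close> \<open>0 < t\<close> by (simp add: nonneg_coeffs_add nonneg_coeffs_smult)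
  show "smult s a + smult t b \<noteq> 0"
    using nonneg_coeffs_comb_nonzero[OF nonneg \<open>a \<noteq> 0\<close> \<open>0 < s\<close>] \<open>0 < t\<close> by simp
  fix z :: complex assume z: "0 < Im z"
  define u where "u = poly (cpoly b) z / poly (cpoly a) z"
  have "poly (cpoly a) z \<noteq> 0" "Im (u * cnj z) \<le> 0"
    using sector z unfolding sector_quotient_def u_def by blast+
  have "of_real s + of_real t * u \<noteq> 0"
  proof
    assume "of_real s + of_real t * u = 0"
    then have "of_real t * u = - of_real s"
      by (simp add: add_eq_0_iff)
    then have "u = - of_real (s / t)"
      using \<open>0 < t\<close> by (simp add: field_simps)
    then have "Im (u * cnj z) = s / t * Im z"
      by simp
    with \<open>Im (u * cnj z) \<le> 0\<close> mult_pos_pos[OF divide_pos_pos[OF \<open>0 < s\<close> \<open>0 < t\<close>] z] show False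
      by simp
  qed
  with \<open>poly (cpoly a) z \<noteq> 0\<close> show "poly (cpoly (smult s a + smult t b)) z \<noteq> 0"
    by (simp add: u_def field_simps)
qed

lemma sector_quotient_comb_shift_nonpos_rooted:
  assumes nonneg: "nonneg_coeffs a" "nonneg_coeffs b" and "a \<noteq> 0" and sector: "sector_quotient a b"
    and "0 < s" "0 < t"
  shows "nonpos_rooted (smult s b + smult t ([:0, 1:] * a))"
proof (rule nonpos_rootedI_upper)
  show "nonneg_coeffs (smult s b + smult t ([:0, 1:] * a))"
    using nonneg \<open>0 < s\<close> \<open>0 < t\<close>
    by (intro nonneg_coeffs_add nonneg_coeffs_smult nonneg_coeffs_mult nonneg_coeffs_linear) simp_all
  show "smult s b + smult t ([:0, 1:] * a) \<noteq> 0"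
    using nonneg_coeffs_comb_nonzero[OF nonneg_coeffs_mult[OF nonneg_coeffs_linear nonneg(1)]
        nonneg(2) _ \<open>0 < t\<close>, of 0 1 s] \<open>a \<noteq> 0\<close> \<open>0 < s\<close> by (simp add: add.commute)
  fix z :: complex assume z: "0 < Im z"
  define u where "u = poly (cpoly b) z / poly (cpoly a) z"
  have "poly (cpoly a) z \<noteq> 0" "0 \<le> Im u"
    using sector z unfolding sector_quotient_def u_def by blast+
  have "of_real s * u + of_real t * z \<noteq> 0"
  proof
    assume "of_real s * u + of_real t * z = 0"
    then have "of_real s * u = - (of_real t * z)"
      by (simp add: add_eq_0_iff2)
    then have "u = - of_real (t / s) * z"
      using \<open>0 < s\<close> by (simp add: field_simps)
    then have "Im u = - (t / s * Im z)"
      by simp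
    with \<open>0 \<le> Im u\<close> mult_pos_pos[OF divide_pos_pos[OF \<open>0 < t\<close> \<open>0 < s\<close>] z] show False
      by simp
  qed
  with \<open>poly (cpoly a) z \<noteq> 0\<close> show "poly (cpoly (smult s b + smult t ([:0, 1:] * a))) z \<noteq> 0"
    by (simp add: u_def field_simps)
qed

lemma interp_pair_if_sector_quotient:
  "nonneg_coeffs a \<Longrightarrow> nonneg_coeffs b \<Longrightarrow> a \<noteq> 0 \<Longrightarrow> sector_quotient a b \<Longrightarrow> interp_pair a b"
  unfolding interp_pair_def
  by (blast intro: sector_quotient_comb_nonpos_rooted sector_quotient_comb_shift_nonpos_rooted)

lemma interp_pair_add:
  assumes "interp_pair a b" "interp_pair a c" "a \<noteq> 0"
  shows "interp_pair a (b + c)"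
proof (rule interp_pair_if_sector_quotient)
  show "nonneg_coeffs a" "nonneg_coeffs (b + c)"
    using interp_pair_nonneg_coeffs[OF assms(1)] interp_pair_nonneg_coeffs[OF assms(2)]
    by (simp_all add: nonneg_coeffs_add)
  show "sector_quotient a (b + c)"
    using interp_pair_sector_quotient[OF assms(1,3)] interp_pair_sector_quotient[OF assms(2,3)]
    by (rule sector_quotient_add)
qed fact

section \<open>Splitting a cube along its first coordinate\<close>

definition face :: "bool \<Rightarrow> cube \<Rightarrow> cube" where
  "face v C = (\<lambda>\<beta>. C (v # \<beta>))"

lemma interp_linear:
  "interp n l r (\<lambda>\<alpha>. p * X \<alpha> + q * Y \<alpha>) = p * interp n l r X + q * interp n l r Y"
proof (induction n arbitrary: l r X Y)
  case (Suc n)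
  have "interp1 (l 0) (r 0) (\<lambda>\<alpha>. p * X \<alpha> + q * Y \<alpha>)
      = (\<lambda>\<alpha>. p * interp1 (l 0) (r 0) X \<alpha> + q * interp1 (l 0) (r 0) Y \<alpha>)"
    by (simp add: interp1_def fun_eq_iff algebra_simps smult_add_right)
  then show ?case
    using Suc by simp
qed simp

lemma interp_mult: "interp n l r (\<lambda>\<alpha>. p * X \<alpha>) = p * interp n l r X"
  using interp_linear[of n l r p X 0 X] by simp

lemma interp_add: "interp n l r (\<lambda>\<alpha>. X \<alpha> + Y \<alpha>) = interp n l r X + interp n l r Y"
  using interp_linear[of n l r 1 X 1 Y] by simp

lemma interp_cong: "(\<And>\<alpha>. length \<alpha> = n \<Longrightarrow> X \<alpha> = Y \<alpha>) \<Longrightarrow> interp n l r X = interp n l r Y"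
proof (induction n arbitrary: l r X Y)
  case (Suc n)
  have "interp1 (l 0) (r 0) X \<alpha> = interp1 (l 0) (r 0) Y \<alpha>" if "length \<alpha> = n" for \<alpha>
    using Suc.prems that by (simp add: interp1_def)
  then show ?case
    by (simp only: interp.simps) (rule Suc.IH)
qed simp

lemma interp_Suc_face:
  "interp (Suc n) l r C =
     smult (l 0) (interp n (\<lambda>i. l (Suc i)) (\<lambda>i. r (Suc i)) (face True C))
   + smult (r 0) (interp n (\<lambda>i. l (Suc i)) (\<lambda>i. r (Suc i)) (face False C))"
proof -
  have "interp1 (l 0) (r 0) C = (\<lambda>\<beta>. [:l 0:] * face True C \<beta> + [:r 0:] * face False C \<beta>)"
    by (simp add: interp1_def face_def fun_eq_iff)
  then show ?thesis
    by (simp only: interp.simps interp_linear) simp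
qed

lemma flip_add: "flip i (\<lambda>\<alpha>. X \<alpha> + Y \<alpha>) = (\<lambda>\<alpha>. flip i X \<alpha> + flip i Y \<alpha>)"
  by (simp add: flip_def fun_eq_iff algebra_simps)

lemma foldr_flip_add:
  "foldr flip is (\<lambda>\<alpha>. X \<alpha> + Y \<alpha>) = (\<lambda>\<alpha>. foldr flip is X \<alpha> + foldr flip is Y \<alpha>)"
  by (induction "is") (simp_all add: flip_add)

lemma flipS_add: "flipS T (\<lambda>\<alpha>. X \<alpha> + Y \<alpha>) = (\<lambda>\<alpha>. flipS T X \<alpha> + flipS T Y \<alpha>)"
  by (simp add: flipS_def foldr_flip_add)

lemma flipS_empty [simp]: "flipS {} C = C"
  by (simp add: flipS_def)

lemma foldr_flip_cong:
  "(\<And>\<alpha>. length \<alpha> = n \<Longrightarrow> X \<alpha> = Y \<alpha>) \<Longrightarrow> length \<alpha> = n \<Longrightarrow> foldr flip is X \<alpha> = foldr flip is Y \<alpha>"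
  by (induction "is" arbitrary: \<alpha>) (auto simp: flip_def)

lemma foldr_flip_nonneg_coeffs:
  "(\<And>\<alpha>. length \<alpha> = n \<Longrightarrow> nonneg_coeffs (X \<alpha>)) \<Longrightarrow> length \<alpha> = n
    \<Longrightarrow> nonneg_coeffs (foldr flip is X \<alpha>)"
  by (induction "is" arbitrary: \<alpha>)
    (auto simp: flip_def intro: nonneg_coeffs_pCons)

lemma foldr_flip_nonzero:
  assumes "\<forall>i\<in>set is. i < n" "length \<alpha> = n" "X \<alpha> \<noteq> 0"
  shows "\<exists>\<beta>. length \<beta> = n \<and> foldr flip is X \<beta> \<noteq> 0"
  using assms(1)
proof (induction "is")
  case (Cons i "is")
  then obtain \<beta> where \<beta>: "length \<beta> = n" "foldr flip is X \<beta> \<noteq> 0"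
    by auto
  have "i < n"
    using Cons.prems by simp
  define \<gamma> where "\<gamma> = \<beta>[i := \<not> \<beta> ! i]"
  have "\<gamma> ! i = (\<not> \<beta> ! i)" "\<gamma>[i := \<beta> ! i] = \<beta>"
    using \<open>i < n\<close> \<beta>(1) by (simp_all add: \<gamma>_def)
  then have "flip i (foldr flip is X) \<gamma> \<noteq> 0"
    using \<beta>(2) by (cases "\<beta> ! i") (simp_all add: flip_def)
  then show ?case
    using \<beta>(1) by (intro exI[of _ \<gamma>]) (simp add: \<gamma>_def)
qed (use assms(2,3) in auto)

lemma face_flip_Suc: "face v (flip (Suc i) C) = flip i (face v C)"
  by (simp add: face_def flip_def fun_eq_iff)

lemma face_foldr_flip_Suc: "face v (foldr flip (map Suc is) C) = foldr flip is (face v C)"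
  by (induction "is") (simp_all add: face_flip_Suc)

lemma face_flip_0:
  "face True (flip 0 C) = face False C"
  "face False (flip 0 C) = (\<lambda>\<beta>. [:0, 1:] * face True C \<beta>)"
  by (simp_all add: face_def flip_def)

lemma sorted_list_of_set_Suc_image:
  assumes "finite T"
  shows "sorted_list_of_set (Suc ` T) = map Suc (sorted_list_of_set T)"
proof -
  have "Suc ` T = set (map Suc (sorted_list_of_set T))"
    using assms by simp
  then show ?thesis
    by (simp only: sorted_list_of_set_sort_remdups)
      (simp add: distinct_map sorted_map distinct_remdups_id sorted_sort_id)
qed

lemma sorted_list_of_set_insert_0_Suc_image:
  assumes "finite T"
  shows "sorted_list_of_set (insert 0 (Suc ` T)) = 0 # map Suc (sorted_list_of_set T)"
proof -
  have "Min (insert 0 (Suc ` T)) = 0"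
    using assms by (intro Min_eqI) auto
  moreover have "insert 0 (Suc ` T) - {0} = Suc ` T"
    by auto
  ultimately show ?thesis
    using sorted_list_of_set_nonempty[of "insert 0 (Suc ` T)"] assms
    by (simp add: sorted_list_of_set_Suc_image)
qed

lemma face_flipS_Suc_image: "finite T \<Longrightarrow> face v (flipS (Suc ` T) C) = flipS T (face v C)"
  by (simp add: flipS_def sorted_list_of_set_Suc_image face_foldr_flip_Suc)

lemma face_flipS_insert_0:
  assumes "finite T"
  shows "face True (flipS (insert 0 (Suc ` T)) C) = flipS T (face False C)"
    and "face False (flipS (insert 0 (Suc ` T)) C) = (\<lambda>\<beta>. [:0, 1:] * flipS T (face True C) \<beta>)"
  using assms
  by (simp_all only: flipS_def sorted_list_of_set_insert_0_Suc_image foldr_Cons o_apply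
      face_flip_0 face_foldr_flip_Suc)

lemma interp_flipS_Suc_image:
  "finite T \<Longrightarrow> interp (Suc n) l r (flipS (Suc ` T) C) =
     smult (l 0) (interp n (\<lambda>i. l (Suc i)) (\<lambda>i. r (Suc i)) (flipS T (face True C)))
   + smult (r 0) (interp n (\<lambda>i. l (Suc i)) (\<lambda>i. r (Suc i)) (flipS T (face False C)))"
  by (simp only: interp_Suc_face face_flipS_Suc_image)

lemma interp_flipS_insert_0:
  "finite T \<Longrightarrow> interp (Suc n) l r (flipS (insert 0 (Suc ` T)) C) =
     smult (l 0) (interp n (\<lambda>i. l (Suc i)) (\<lambda>i. r (Suc i)) (flipS T (face False C)))
   + smult (r 0) ([:0, 1:] * interp n (\<lambda>i. l (Suc i)) (\<lambda>i. r (Suc i)) (flipS T (face True C)))"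
  by (simp only: interp_Suc_face face_flipS_insert_0 interp_mult)

lemma interpolatory_cube_Suc_interp_pair:
  assumes cube: "interpolatory_cube (Suc n) C"
    and pos: "\<forall>i<n. 0 < l i \<and> 0 < r i" and T: "T \<subseteq> {..<n}"
  shows "interp_pair (interp n l r (flipS T (face True C))) (interp n l r (flipS T (face False C)))"
  unfolding interp_pair_def
proof (intro allI impI)
  fix s t :: real assume "0 < s" "0 < t"
  have "finite T"
    using T finite_subset by blast
  define l' r' where "l' = case_nat s l" and "r' = case_nat t r"
  have "\<forall>i<Suc n. 0 < l' i \<and> 0 < r' i"
    using pos \<open>0 < s\<close> \<open>0 < t\<close> by (auto simp: l'_def r'_def less_Suc_eq_0_disj)
  moreover have "Suc ` T \<subseteq> {..<Suc n}" "insert 0 (Suc ` T) \<subseteq> {..<Suc n}"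
    using T by auto
  ultimately have "nonpos_rooted (interp (Suc n) l' r' (flipS (Suc ` T) C))"
    "nonpos_rooted (interp (Suc n) l' r' (flipS (insert 0 (Suc ` T)) C))"
    using cube unfolding interpolatory_cube_def nonpos_rooted_def by blast+
  moreover have "(\<lambda>i. l' (Suc i)) = l" "(\<lambda>i. r' (Suc i)) = r" "l' 0 = s" "r' 0 = t"
    by (simp_all add: l'_def r'_def)
  ultimately show "nonpos_rooted (smult s (interp n l r (flipS T (face True C)))
        + smult t (interp n l r (flipS T (face False C))))
    \<and> nonpos_rooted (smult s (interp n l r (flipS T (face False C)))
        + smult t ([:0, 1:] * interp n l r (flipS T (face True C))))"
    by (simp only: interp_flipS_Suc_image[OF \<open>finite T\<close>] interp_flipS_insert_0[OF \<open>finite T\<close>])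
qed

lemma interpolatory_cube_SucI:
  assumes pairs: "\<And>l r T. \<forall>i<n. 0 < l i \<and> 0 < r i \<Longrightarrow> T \<subseteq> {..<n} \<Longrightarrow>
    interp_pair (interp n l r (flipS T (face True C))) (interp n l r (flipS T (face False C)))"
  shows "interpolatory_cube (Suc n) C"
  unfolding interpolatory_cube_def
proof (intro allI impI)
  fix l r :: "nat \<Rightarrow> real" and T :: "nat set"
  assume pos: "\<forall>i<Suc n. 0 < l i \<and> 0 < r i" and T: "T \<subseteq> {..<Suc n}"
  define T' where "T' = {i. Suc i \<in> T}"
  have "T' \<subseteq> {..<n}"
    using T by (auto simp: T'_def)
  then have "finite T'"
    using finite_subset by blast
  have "\<forall>i<n. 0 < l (Suc i) \<and> 0 < r (Suc i)"
    using pos by auto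
  from pairs[OF this \<open>T' \<subseteq> {..<n}\<close>]
  have "interp_pair (interp n (\<lambda>i. l (Suc i)) (\<lambda>i. r (Suc i)) (flipS T' (face True C)))
      (interp n (\<lambda>i. l (Suc i)) (\<lambda>i. r (Suc i)) (flipS T' (face False C)))" .
  moreover have "0 < l 0" "0 < r 0"
    using pos by auto
  moreover have "T = (if 0 \<in> T then insert 0 (Suc ` T') else Suc ` T')"
    by (auto simp: T'_def image_iff) (metis not0_implies_Suc)+
  ultimately have "nonpos_rooted (interp (Suc n) l r (flipS T C))"
    unfolding interp_pair_def
    by (cases "0 \<in> T") (simp_all only: if_True if_False interp_flipS_Suc_image[OF \<open>finite T'\<close>]
        interp_flipS_insert_0[OF \<open>finite T'\<close>])
  then show "standard (interp (Suc n) l r (flipS T C)) \<and> nonpos_zeros (interp (Suc n) l r (flipS T C))"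
    by (simp add: nonpos_rooted_def)
qed

lemma nonneg_coeffs_entry_if_interp:
  assumes "\<And>l r. \<forall>i<n. 0 < l i \<and> 0 < r i \<Longrightarrow> nonneg_coeffs (interp n l r X)" "length \<alpha> = n"
  shows "nonneg_coeffs (X \<alpha>)"
  using assms
proof (induction n arbitrary: X \<alpha>)
  case 0
  then show ?case by auto
next
  case (Suc n)
  obtain v \<beta> where \<alpha>: "\<alpha> = v # \<beta>" "length \<beta> = n"
    using Suc.prems(2) by (cases \<alpha>) auto
  have "nonneg_coeffs (interp n l r (face v X))" if "\<forall>i<n. 0 < l i \<and> 0 < r i" for l r
  proof -
    have "nonneg_coeffs (smult s (interp n l r (face True X)) + smult t (interp n l r (face False X)))"
      if "0 < s" "0 < t" for s t
    proof -
      have "\<forall>i<Suc n. 0 < case_nat s l i \<and> 0 < case_nat t r i"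
      proof (intro allI impI)
        fix i assume "i < Suc n"
        with \<open>\<forall>i<n. 0 < l i \<and> 0 < r i\<close> that show "0 < case_nat s l i \<and> 0 < case_nat t r i"
          by (cases i) auto
      qed
      from Suc.prems(1)[OF this] show ?thesis
        by (simp only: interp_Suc_face nat.case)
    qed
    from nonneg_coeffs_of_two_weight[OF this] show ?thesis
      by (cases v) auto
  qed
  from Suc.IH[OF this \<alpha>(2)] \<alpha>(1) show ?case
    by (simp add: face_def)
qed

lemma interpolatory_cube_nonneg_coeffs:
  assumes "interpolatory_cube n C" "length \<alpha> = n"
  shows "nonneg_coeffs (C \<alpha>)"
proof (rule nonneg_coeffs_entry_if_interp[OF _ assms(2)])
  fix l r :: "nat \<Rightarrow> real" assume "\<forall>i<n. 0 < l i \<and> 0 < r i"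
  with assms(1) have "nonpos_rooted (interp n l r (flipS {} C))"
    unfolding interpolatory_cube_def nonpos_rooted_def by blast
  then show "nonneg_coeffs (interp n l r C)"
    by (simp add: nonpos_rooted_nonneg_coeffs)
qed

lemma interp_nonneg_coeffs:
  "(\<And>\<alpha>. length \<alpha> = n \<Longrightarrow> nonneg_coeffs (X \<alpha>)) \<Longrightarrow> \<forall>i<n. 0 < l i \<and> 0 < r i
    \<Longrightarrow> nonneg_coeffs (interp n l r X)"
proof (induction n arbitrary: l r X)
  case (Suc n)
  then show ?case
    by (simp only: interp_Suc_face)
      (intro nonneg_coeffs_add nonneg_coeffs_smult Suc.IH; auto simp: face_def less_imp_le)
qed simp

lemma interp_nonzero:
  assumes "\<And>\<alpha>. length \<alpha> = n \<Longrightarrow> nonneg_coeffs (X \<alpha>)" "\<forall>i<n. 0 < l i \<and> 0 < r i"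
    and "length \<alpha> = n" "X \<alpha> \<noteq> 0"
  shows "interp n l r X \<noteq> 0"
  using assms
proof (induction n arbitrary: l r X \<alpha>)
  case (Suc n)
  obtain v \<beta> where \<alpha>: "\<alpha> = v # \<beta>" "length \<beta> = n"
    using Suc.prems(3) by (cases \<alpha>) auto
  let ?I = "\<lambda>w. interp n (\<lambda>i. l (Suc i)) (\<lambda>i. r (Suc i)) (face w X)"
  have "nonneg_coeffs (?I w)" for w
    using Suc.prems(1,2) by (intro interp_nonneg_coeffs) (auto simp: face_def)
  moreover have "?I v \<noteq> 0"
    using Suc.prems \<alpha> by (intro Suc.IH[of _ _ _ \<beta>]) (auto simp: face_def)
  moreover have "0 < l 0" "0 < r 0"
    using Suc.prems(2) by auto
  ultimately show ?case
    unfolding interp_Suc_face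
    using nonneg_coeffs_comb_nonzero[of "?I True" "?I False" "l 0" "r 0"]
      nonneg_coeffs_comb_nonzero[of "?I False" "?I True" "r 0" "l 0"]
    by (cases v) (auto simp: add.commute)
qed simp

lemma interp_flipS_nonzero:
  assumes "\<And>\<alpha>. length \<alpha> = n \<Longrightarrow> nonneg_coeffs (X \<alpha>)" "\<forall>i<n. 0 < l i \<and> 0 < r i"
    and "length \<alpha> = n" "X \<alpha> \<noteq> 0" "T \<subseteq> {..<n}"
  shows "interp n l r (flipS T X) \<noteq> 0"
proof -
  have "finite T"
    using assms(5) finite_subset by blast
  with assms(5) have "\<forall>i\<in>set (sorted_list_of_set T). i < n"
    by auto
  then obtain \<beta> where "length \<beta> = n" "flipS T X \<beta> \<noteq> 0"
    using foldr_flip_nonzero[of "sorted_list_of_set T" n \<alpha> X] assms(3,4) by (auto simp: flipS_def)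
  moreover have "nonneg_coeffs (flipS T X \<gamma>)" if "length \<gamma> = n" for \<gamma>
    unfolding flipS_def using assms(1) that by (rule foldr_flip_nonneg_coeffs)
  ultimately show ?thesis
    using assms(2) by (intro interp_nonzero) auto
qed

lemma interp_flipS_cong:
  "(\<And>\<alpha>. length \<alpha> = n \<Longrightarrow> X \<alpha> = Y \<alpha>) \<Longrightarrow> interp n l r (flipS T X) = interp n l r (flipS T Y)"
  unfolding flipS_def by (rule interp_cong, rule foldr_flip_cong)

lemma interpolatory_cube_face_interp_nonzero:
  assumes "interpolatory_cube (Suc n) C" "length \<alpha> = n" "C (True # \<alpha>) \<noteq> 0"
    and "\<forall>i<n. 0 < l i \<and> 0 < r i" "T \<subseteq> {..<n}"
  shows "interp n l r (flipS T (face True C)) \<noteq> 0"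
  using assms(2-5) interpolatory_cube_nonneg_coeffs[OF assms(1)]
  by (intro interp_flipS_nonzero) (auto simp: face_def)

theorem lemma4p7:
  fixes k :: nat and P Q :: "bool list \<Rightarrow> real poly"
  assumes "k \<ge> 1"
    and "\<forall>\<alpha>. length \<alpha> = k - 1 \<longrightarrow> P (True # \<alpha>) = Q (True # \<alpha>)"
    and "\<exists>\<alpha>. length \<alpha> = k - 1 \<and> P (True # \<alpha>) \<noteq> 0"
    and "interpolatory_cube k P" and "interpolatory_cube k Q"
  shows "interpolatory_cube k
           (\<lambda>\<alpha>. if \<alpha> \<noteq> [] \<and> hd \<alpha> then P \<alpha> else P \<alpha> + Q \<alpha>)"
proof -
  obtain n where k: "k = Suc n"
    using assms(1) by (cases k) auto
  obtain \<alpha> where \<alpha>: "length \<alpha> = n" "P (True # \<alpha>) \<noteq> 0"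
    using assms(3) by (auto simp: k)
  show ?thesis
    unfolding k
  proof (rule interpolatory_cube_SucI)
    fix l r :: "nat \<Rightarrow> real" and T :: "nat set"
    assume pos: "\<forall>i<n. 0 < l i \<and> 0 < r i" and T: "T \<subseteq> {..<n}"
    let ?J = "\<lambda>X. interp n l r (flipS T X)"
    have P: "interp_pair (?J (face True P)) (?J (face False P))"
      and Q: "interp_pair (?J (face True Q)) (?J (face False Q))"
      using assms(4,5) by (simp_all add: k interpolatory_cube_Suc_interp_pair pos T)
    have "?J (face True Q) = ?J (face True P)"
      using assms(2) by (intro interp_flipS_cong) (simp add: k face_def)
    moreover have "?J (face True P) \<noteq> 0"
      using interpolatory_cube_face_interp_nonzero[where C = P, OF _ \<alpha> pos T] assms(4) by (simp add: k)
    ultimately have "interp_pair (?J (face True P)) (?J (face False P) + ?J (face False Q))"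
      using interp_pair_add[OF P] Q by simp
    then show "interp_pair (?J (face True (\<lambda>\<alpha>. if \<alpha> \<noteq> [] \<and> hd \<alpha> then P \<alpha> else P \<alpha> + Q \<alpha>)))
        (?J (face False (\<lambda>\<alpha>. if \<alpha> \<noteq> [] \<and> hd \<alpha> then P \<alpha> else P \<alpha> + Q \<alpha>)))"
      by (simp add: face_def flipS_add interp_add)
  qed
qed

end
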